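(* There exists a constant $C'>0$ depending only on $\eta$ and $t$ such that, provided $c_I,c_A$ are sufficiently small depending only on $\eta$: (i) $\mathbb P_p(\psi_1\vee\psi_2=1)\le\eta/2$; (ii) for every $q\in[0,1]^N$ with $$\|(q-p)_{>A}\|_t\ge C'\left(\frac{\|p_{>A}\|_1^{\frac{2-t}{t}}}{n^{\frac{2t-2}{t}}}+\frac1n\right),$$ we have $\mathbb P_q(\psi_1\vee\psi_2=0)\le\eta/2$.
   Context: Binomial model: $N\ge2$, $n\ge2$ even. For $q\in[0,1]^N$ one observes $X_1,\dots,X_n$ i.i.d. in $\{0,1\}^N$ with mutually independent coordinates $X_l(j)\sim\mathrm{Ber}(q_j)$; $\mathbb P_q$ is their joint law. Known $p\in[0,1]^N$ with $p_1\ge\dots\ge p_N$ and $\max_jp_j\le1/2$; $\eta\in(0,1)$; $t\in[1,2]$, $r=\frac{2t}{4-t}$, $b=\frac{4-2t}{4-t}$; $\|x\|_s=(\sum_j|x_j|^s)^{1/s}$; $x_{>u}=(0,\dots,0,x_{u+1},\dots,x_N)$. $I=\min\{J\in\{0,\dots,N\}:\sum_{i>J}p_i^2\le c_I/n^2\}$; $A=\max\{a\in\{1,\dots,I\}:p_a^{b/2}\ge c_A/(\sqrt n(\sum_{i\le I}p_i^r)^{1/4})\}$ with $\max\emptyset=-\infty$, $x_{>-\infty}=x$; $c_I,c_A>0$ small constants depending only on $\eta$. $N_j=\sum_{l=1}^nX_l(j)$; $\psi_2=\mathbf 1\{\exists j>A:N_j\ge2\}$; $T_1=\sum_{i>A}(N_i/n-p_i)$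 and, with $\bar c=4/\sqrt\eta$, $\psi_1=\mathbf 1\{|T_1|>\bar c\sqrt{\sum_{i>A}p_i/n}\}$; $\psi_1\vee\psi_2=\max(\psi_1,\psi_2)$. *)

theory Defs
  imports "HOL-Analysis.Analysis"
begin

text \<open>Indices of coordinates are 1..N, indices of observations are 1..n.
  A sample is X :: nat => nat => bool, X l j = X_l(j).\<close>

definition pow0 :: "real \<Rightarrow> real \<Rightarrow> real" where
  "pow0 x a = (if a = 0 then 1 else x powr a)"

definition samples :: "nat \<Rightarrow> nat \<Rightarrow> (nat \<Rightarrow> nat \<Rightarrow> bool) set" where
  "samples N n = PiE {1..n} (\<lambda>_. PiE {1..N} (\<lambda>_. UNIV))"

definition sample_weight :: "nat \<Rightarrow> nat \<Rightarrow> (nat \<Rightarrow> real) \<Rightarrow> (nat \<Rightarrow> nat \<Rightarrow> bool) \<Rightarrow> real" where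
  "sample_weight N n q X = (\<Prod>l\<in>{1..n}. \<Prod>j\<in>{1..N}. if X l j then q j else 1 - q j)"

definition Pq :: "nat \<Rightarrow> nat \<Rightarrow> (nat \<Rightarrow> real) \<Rightarrow> ((nat \<Rightarrow> nat \<Rightarrow> bool) \<Rightarrow> bool) \<Rightarrow> real" where
  "Pq N n q E = (\<Sum>X\<in>samples N n. if E X then sample_weight N n q X else 0)"

definition cnt :: "nat \<Rightarrow> (nat \<Rightarrow> nat \<Rightarrow> bool) \<Rightarrow> nat \<Rightarrow> nat" where
  "cnt n X j = card {l\<in>{1..n}. X l j}"

definition r_of :: "real \<Rightarrow> real" where "r_of t = 2 * t / (4 - t)"
definition b_of :: "real \<Rightarrow> real" where "b_of t = (4 - 2 * t) / (4 - t)"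

definition I_idx :: "real \<Rightarrow> nat \<Rightarrow> nat \<Rightarrow> (nat \<Rightarrow> real) \<Rightarrow> nat" where
  "I_idx cI N n p = (LEAST J. J \<le> N \<and> (\<Sum>i\<in>{J<..N}. (p i)\<^sup>2) \<le> cI / (real n)\<^sup>2)"

text \<open>A; the value 0 encodes max of the empty set (= -infinity), which is harmless
  since x_{>0} = x = x_{>-infinity}.\<close>
definition A_idx :: "real \<Rightarrow> real \<Rightarrow> real \<Rightarrow> nat \<Rightarrow> nat \<Rightarrow> (nat \<Rightarrow> real) \<Rightarrow> nat" where
  "A_idx t cI cA N n p =
    (let I = I_idx cI N n p;
         S = {a\<in>{1..I}. pow0 (p a) (b_of t / 2)
               \<ge> cA / (sqrt (real n) * (\<Sum>i\<in>{1..I}. p i powr r_of t) powr (1/4))}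
     in if S = {} then 0 else Max S)"

definition psi2 :: "nat \<Rightarrow> nat \<Rightarrow> nat \<Rightarrow> (nat \<Rightarrow> nat \<Rightarrow> bool) \<Rightarrow> bool" where
  "psi2 A N n X = (\<exists>j\<in>{A<..N}. cnt n X j \<ge> 2)"

definition T1 :: "nat \<Rightarrow> nat \<Rightarrow> nat \<Rightarrow> (nat \<Rightarrow> real) \<Rightarrow> (nat \<Rightarrow> nat \<Rightarrow> bool) \<Rightarrow> real" where
  "T1 A N n p X = (\<Sum>i\<in>{A<..N}. real (cnt n X i) / real n - p i)"

definition psi1 :: "real \<Rightarrow> nat \<Rightarrow> nat \<Rightarrow> nat \<Rightarrow> (nat \<Rightarrow> real) \<Rightarrow> (nat \<Rightarrow> nat \<Rightarrow> bool) \<Rightarrow> bool" where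
  "psi1 \<eta> A N n p X = (\<bar>T1 A N n p X\<bar> > (4 / sqrt \<eta>) * sqrt ((\<Sum>i\<in>{A<..N}. p i) / real n))"

definition test :: "real \<Rightarrow> real \<Rightarrow> real \<Rightarrow> real \<Rightarrow> nat \<Rightarrow> nat \<Rightarrow> (nat \<Rightarrow> real) \<Rightarrow> (nat \<Rightarrow> nat \<Rightarrow> bool) \<Rightarrow> bool" where
  "test \<eta> t cI cA N n p X =
    (let A = A_idx t cI cA N n p in psi1 \<eta> A N n p X \<or> psi2 A N n X)"

definition tail_norm :: "real \<Rightarrow> nat \<Rightarrow> nat \<Rightarrow> (nat \<Rightarrow> real) \<Rightarrow> real" where
  "tail_norm t A N x = (\<Sum>j\<in>{A<..N}. \<bar>x j\<bar> powr t) powr (1 / t)"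

end

theory Submission
  imports Defs
begin

text \<open>Under \<open>p\<close>, the test \<open>\<psi>\<^sub>2\<close> fires only if some coordinate beyond \<open>A\<close> is observed
  twice; Markov's inequality for \<open>\<Sum> N\<^sub>j(N\<^sub>j - 1)/2\<close> bounds this by
  \<open>n\<^sup>2/2 \<Sum>\<^sub>j\<^sub>>\<^sub>A p\<^sub>j\<^sup>2\<close>, which the choice of \<open>I\<close> and \<open>A\<close> makes at most
  \<open>(c\<^sub>I + c\<^sub>A\<^sup>4)/2\<close>, while \<open>\<psi>\<^sub>1\<close> is controlled by Chebyshev's inequality.

  Under \<open>q\<close>, let \<open>D = \<Sum>\<^sub>j\<^sub>>\<^sub>A (q\<^sub>j - p\<^sub>j)\<close>. If \<open>D\<close> is large compared with the threshold
  of \<open>\<psi>\<^sub>1\<close>, Chebyshev's inequality under \<open>q\<close> shows that \<open>\<psi>\<^sub>1\<close> fires. Otherwise Young's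
  inequality interpolates \<open>\<parallel>(q - p)\<^sub>>\<^sub>A\<parallel>\<^sub>t\<^sup>t\<close> between an \<open>\<ell>\<^sub>1\<close> mass controlled by \<open>D\<close>
  and the \<open>\<ell>\<^sub>2\<close> masses, so the separation forces \<open>\<Sum>\<^sub>j\<^sub>>\<^sub>A q\<^sub>j\<^sup>2 \<ge> K/n\<^sup>2\<close>; then with
  probability at least \<open>1 - \<eta>/2\<close> some coordinate is observed in both halves of the sample
  and \<open>\<psi>\<^sub>2\<close> fires.\<close>

section \<open>Expectations under the product Bernoulli law\<close>

abbreviation (input) ind :: "bool \<Rightarrow> real" where "ind b \<equiv> (if b then 1 else 0)"

definition sample_expect ::
    "nat \<Rightarrow> nat \<Rightarrow> (nat \<Rightarrow> real) \<Rightarrow> ((nat \<Rightarrow> nat \<Rightarrow> bool) \<Rightarrow> real) \<Rightarrow> real" where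
  "sample_expect N n q f = (\<Sum>X\<in>samples N n. sample_weight N n q X * f X)"

definition seq_expect :: "nat \<Rightarrow> real \<Rightarrow> ((nat \<Rightarrow> bool) \<Rightarrow> real) \<Rightarrow> real" where
  "seq_expect n x G =
     (\<Sum>c\<in>PiE {1..n} (\<lambda>_. UNIV). (\<Prod>l\<in>{1..n}. if c l then x else 1 - x) * G c)"

definition bern_mean :: "real \<Rightarrow> (bool \<Rightarrow> real) \<Rightarrow> real" where
  "bern_mean x f = x * f True + (1 - x) * f False"

definition sample_columns :: "nat \<Rightarrow> nat \<Rightarrow> (nat \<Rightarrow> nat \<Rightarrow> bool) \<Rightarrow> nat \<Rightarrow> nat \<Rightarrow> bool" where
  "sample_columns N n X = (\<lambda>j\<in>{1..N}. \<lambda>l\<in>{1..n}. X l j)"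

lemma Pq_eq_sample_expect: "Pq N n q E = sample_expect N n q (\<lambda>X. ind (E X))"
  unfolding Pq_def sample_expect_def by (intro sum.cong) auto

lemma sample_expect_cong:
  "(\<And>X. X \<in> samples N n \<Longrightarrow> f X = g X) \<Longrightarrow> sample_expect N n q f = sample_expect N n q g"
  unfolding sample_expect_def by (intro sum.cong) auto

lemma sample_expect_add:
  "sample_expect N n q (\<lambda>X. f X + g X) = sample_expect N n q f + sample_expect N n q g"
  unfolding sample_expect_def by (simp add: distrib_left sum.distrib)

lemma sample_expect_cmult: "sample_expect N n q (\<lambda>X. c * f X) = c * sample_expect N n q f"
  unfolding sample_expect_def by (simp add: sum_distrib_left ac_simps)

lemma sample_expect_sum:
  "sample_expect N n q (\<lambda>X. \<Sum>i\<in>S. f i X) = (\<Sum>i\<in>S. sample_expect N n q (f i))"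
  unfolding sample_expect_def by (simp add: sum_distrib_left sum.swap[of _ S])

lemma sample_weight_nonneg:
  "\<forall>j\<in>{1..N}. 0 \<le> q j \<and> q j \<le> 1 \<Longrightarrow> 0 \<le> sample_weight N n q X"
  unfolding sample_weight_def by (intro prod_nonneg) auto

lemma sample_expect_mono:
  assumes "\<forall>j\<in>{1..N}. 0 \<le> q j \<and> q j \<le> 1" and "\<And>X. X \<in> samples N n \<Longrightarrow> f X \<le> g X"
  shows "sample_expect N n q f \<le> sample_expect N n q g"
  unfolding sample_expect_def using assms
  by (intro sum_mono mult_left_mono) (auto intro: sample_weight_nonneg)

lemma sample_expect_prod_columns:
  "sample_expect N n q (\<lambda>X. \<Prod>j\<in>{1..N}. G j (sample_columns N n X j))
     = (\<Prod>j\<in>{1..N}. seq_expect n (q j) (G j))"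
proof -
  let ?w = "\<lambda>j c. \<Prod>l\<in>{1..n}. if c l then q j else 1 - q j"
  let ?C = "PiE {1..N} (\<lambda>_. PiE {1..n} (\<lambda>_. UNIV::bool set))"
  define rows where "rows = (\<lambda>Y. \<lambda>l\<in>{1..n}. \<lambda>j\<in>{1..N}. (Y::nat \<Rightarrow> nat \<Rightarrow> bool) j l)"
  have "sample_expect N n q (\<lambda>X. \<Prod>j\<in>{1..N}. G j (sample_columns N n X j))
      = (\<Sum>X\<in>samples N n. \<Prod>j\<in>{1..N}. ?w j (sample_columns N n X j) * G j (sample_columns N n X j))"
    unfolding sample_expect_def
  proof (intro sum.cong refl)
    fix X
    have "sample_weight N n q X = (\<Prod>j\<in>{1..N}. ?w j (sample_columns N n X j))"
      unfolding sample_weight_def sample_columns_def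
      by (subst prod.swap) (intro prod.cong refl, auto)
    then show "sample_weight N n q X * (\<Prod>j\<in>{1..N}. G j (sample_columns N n X j)) =
        (\<Prod>j\<in>{1..N}. ?w j (sample_columns N n X j) * G j (sample_columns N n X j))"
      by (simp add: prod.distrib)
  qed
  also have "\<dots> = (\<Sum>Y\<in>?C. \<Prod>j\<in>{1..N}. ?w j (Y j) * G j (Y j))"
    by (rule sum.reindex_bij_witness[of _ rows "sample_columns N n"])
       (auto simp: rows_def sample_columns_def samples_def PiE_def extensional_def fun_eq_iff)
  also have "\<dots> = (\<Prod>j\<in>{1..N}. seq_expect n (q j) (G j))"
    unfolding seq_expect_def by (subst prod_sum_PiE) (auto intro!: finite_PiE)
  finally show ?thesis .
qed

lemma seq_expect_prod:
  "seq_expect n x (\<lambda>c. \<Prod>l\<in>{1..n}. h l (c l)) = (\<Prod>l\<in>{1..n}. bern_mean x (h l))"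
proof -
  have "(\<Prod>l\<in>{1..n}. bern_mean x (h l))
      = (\<Prod>l\<in>{1..n}. \<Sum>b\<in>(UNIV::bool set). (if b then x else 1 - x) * h l b)"
    by (simp add: bern_mean_def UNIV_bool add.commute)
  also have "\<dots> = (\<Sum>c\<in>PiE {1..n} (\<lambda>_. UNIV).
                    \<Prod>l\<in>{1..n}. (if c l then x else 1 - x) * h l (c l))"
    by (rule prod_sum_PiE) auto
  finally show ?thesis
    unfolding seq_expect_def by (simp add: prod.distrib)
qed

lemma seq_expect_add: "seq_expect n x (\<lambda>c. f c + g c) = seq_expect n x f + seq_expect n x g"
  unfolding seq_expect_def by (simp add: distrib_left sum.distrib)

lemma seq_expect_diff: "seq_expect n x (\<lambda>c. f c - g c) = seq_expect n x f - seq_expect n x g"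
  unfolding seq_expect_def by (simp add: right_diff_distrib sum_subtractf)

lemma sample_expect_prod:
  "sample_expect N n q (\<lambda>X. \<Prod>j\<in>{1..N}. \<Prod>l\<in>{1..n}. h l j (X l j))
     = (\<Prod>j\<in>{1..N}. \<Prod>l\<in>{1..n}. bern_mean (q j) (h l j))"
proof -
  have "sample_expect N n q (\<lambda>X. \<Prod>j\<in>{1..N}. \<Prod>l\<in>{1..n}. h l j (X l j))
      = sample_expect N n q (\<lambda>X. \<Prod>j\<in>{1..N}. (\<lambda>c. \<Prod>l\<in>{1..n}. h l j (c l)) (sample_columns N n X j))"
    by (intro sample_expect_cong prod.cong refl) (simp add: sample_columns_def)
  also have "\<dots> = (\<Prod>j\<in>{1..N}. seq_expect n (q j) (\<lambda>c. \<Prod>l\<in>{1..n}. h l j (c l)))"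
    by (rule sample_expect_prod_columns)
  also have "\<dots> = (\<Prod>j\<in>{1..N}. \<Prod>l\<in>{1..n}. bern_mean (q j) (h l j))"
    by (intro prod.cong refl) (rule seq_expect_prod)
  finally show ?thesis .
qed

lemma prod_prod_delta:
  fixes l0 j0 :: nat
  assumes "l0 \<in> {1..n}" "j0 \<in> {1..N}"
  shows "(\<Prod>j\<in>{1..N}. \<Prod>l\<in>{1..n::nat}. if l = l0 \<and> j = j0 then f l j else (1::real))
    = f l0 j0"
proof -
  have "(\<Prod>l\<in>{1..n}. if l = l0 \<and> j = j0 then f l j else (1::real))
      = (if j = j0 then f l0 j0 else 1)" for j :: nat
    using assms(1) by (cases "j = j0") (simp_all add: prod.delta)
  then show ?thesis using assms(2) by (simp add: prod.delta)
qed

lemma sample_expect_pair: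
  assumes "l0 \<in> {1..n}" "j0 \<in> {1..N}" "l1 \<in> {1..n}" "j1 \<in> {1..N}"
  shows "sample_expect N n q (\<lambda>X. f (X l0 j0) * g (X l1 j1)) =
     (if l0 = l1 \<and> j0 = j1 then bern_mean (q j0) (\<lambda>b. f b * g b)
      else bern_mean (q j0) f * bern_mean (q j1) g)"
proof (cases "l0 = l1 \<and> j0 = j1")
  case True
  let ?h = "\<lambda>l j b. if l = l0 \<and> j = j0 then f b * g b else 1"
  have "sample_expect N n q (\<lambda>X. f (X l0 j0) * g (X l1 j1)) =
      sample_expect N n q (\<lambda>X. \<Prod>j\<in>{1..N}. \<Prod>l\<in>{1..n}. ?h l j (X l j))"
    using True assms by (intro sample_expect_cong) (subst prod_prod_delta, auto)
  also have "\<dots> = (\<Prod>j\<in>{1..N}. \<Prod>l\<in>{1..n}.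
                    if l = l0 \<and> j = j0 then bern_mean (q j) (\<lambda>b. f b * g b) else 1)"
    using sample_expect_prod[of N n q ?h] by (simp add: bern_mean_def if_distrib cong: if_cong)
  also have "\<dots> = bern_mean (q j0) (\<lambda>b. f b * g b)"
    using assms by (subst prod_prod_delta) auto
  finally show ?thesis using True by simp
next
  case False
  let ?h = "\<lambda>l j b. (if l = l0 \<and> j = j0 then f b else 1) * (if l = l1 \<and> j = j1 then g b else 1)"
  have split: "(\<Prod>j\<in>{1..N}. \<Prod>l\<in>{1..n}. (if l = l0 \<and> j = j0 then u l j else 1) *
        (if l = l1 \<and> j = j1 then v l j else 1)) = u l0 j0 * v l1 j1" for u v :: "nat \<Rightarrow> nat \<Rightarrow> real"
    by (simp only: prod.distrib prod_prod_delta[OF assms(1,2)] prod_prod_delta[OF assms(3,4)])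
  have "sample_expect N n q (\<lambda>X. f (X l0 j0) * g (X l1 j1)) =
      sample_expect N n q (\<lambda>X. \<Prod>j\<in>{1..N}. \<Prod>l\<in>{1..n}. ?h l j (X l j))"
    using split[of "\<lambda>l j. f (X l j)" "\<lambda>l j. g (X l j)" for X] by simp
  also have "\<dots> = (\<Prod>j\<in>{1..N}. \<Prod>l\<in>{1..n}. (if l = l0 \<and> j = j0 then bern_mean (q j) f else 1) *
                    (if l = l1 \<and> j = j1 then bern_mean (q j) g else 1))"
    using sample_expect_prod[of N n q ?h] False
    by (simp add: bern_mean_def) (intro prod.cong refl, auto simp: bern_mean_def algebra_simps)
  also have "\<dots> = bern_mean (q j0) f * bern_mean (q j1) g" by (rule split)
  finally show ?thesis using False by (simp only: if_False)
qed

lemma sample_expect_single: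
  assumes "l0 \<in> {1..n}" "j0 \<in> {1..N}"
  shows "sample_expect N n q (\<lambda>X. f (X l0 j0)) = bern_mean (q j0) f"
  using sample_expect_pair[OF assms assms, where f=f and g="\<lambda>_. 1" and q=q]
  by (simp add: bern_mean_def)

lemma Pq_mono:
  assumes "\<forall>j\<in>{1..N}. 0 \<le> q j \<and> q j \<le> 1" and "\<And>X. X \<in> samples N n \<Longrightarrow> E X \<Longrightarrow> F X"
  shows "Pq N n q E \<le> Pq N n q F"
  unfolding Pq_eq_sample_expect using assms by (intro sample_expect_mono) auto

lemma Pq_disj_le:
  assumes "\<forall>j\<in>{1..N}. 0 \<le> q j \<and> q j \<le> 1"
  shows "Pq N n q (\<lambda>X. E X \<or> F X) \<le> Pq N n q E + Pq N n q F"
  unfolding Pq_eq_sample_expect sample_expect_add[symmetric]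
  using assms by (intro sample_expect_mono) auto

lemma Pq_le_sample_expect:
  assumes "\<forall>j\<in>{1..N}. 0 \<le> q j \<and> q j \<le> 1" and "\<And>X. X \<in> samples N n \<Longrightarrow> E X \<Longrightarrow> 1 \<le> f X"
    and "\<And>X. X \<in> samples N n \<Longrightarrow> 0 \<le> f X"
  shows "Pq N n q E \<le> sample_expect N n q f"
  unfolding Pq_eq_sample_expect using assms by (intro sample_expect_mono) auto

lemma Pq_markov:
  assumes "\<forall>j\<in>{1..N}. 0 \<le> q j \<and> q j \<le> 1" and "\<And>X. X \<in> samples N n \<Longrightarrow> 0 \<le> f X"
    and "0 < a"
  shows "Pq N n q (\<lambda>X. a \<le> f X) \<le> sample_expect N n q f / a"
proof -
  have "Pq N n q (\<lambda>X. a \<le> f X) \<le> sample_expect N n q (\<lambda>X. (1/a) * f X)"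
    using assms by (intro Pq_le_sample_expect) (auto simp: field_simps)
  then show ?thesis by (simp only: sample_expect_cmult) simp
qed

lemma Pq_pos_eq_0:
  assumes "\<forall>j\<in>{1..N}. 0 \<le> q j \<and> q j \<le> 1" and "\<And>X. X \<in> samples N n \<Longrightarrow> 0 \<le> f X"
    and "sample_expect N n q f = 0"
  shows "Pq N n q (\<lambda>X. 0 < f X) = 0"
proof -
  have fin: "finite (samples N n)" unfolding samples_def by (intro finite_PiE) auto
  have "\<forall>X\<in>samples N n. sample_weight N n q X * f X = 0"
    using assms sample_weight_nonneg[OF assms(1)]
    by (subst sum_nonneg_eq_0_iff[OF fin, symmetric]) (auto simp: sample_expect_def)
  then show ?thesis unfolding Pq_def by (intro sum.neutral) auto
qed

section \<open>Moments of the counts\<close>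

lemma cnt_eq_sum: "real (cnt n X j) = (\<Sum>l\<in>{1..n}. ind (X l j))"
  unfolding cnt_def by (simp add: sum.If_cases Int_def)

lemma sample_expect_centered_sum_sq:
  assumes T: "T \<subseteq> {1..N}" and n: "1 \<le> n"
  shows "sample_expect N n q (\<lambda>X. (\<Sum>j\<in>T. real (cnt n X j) / n - q j)\<^sup>2)
    = (\<Sum>j\<in>T. q j * (1 - q j)) / n"
proof -
  have finT: "finite T" using T finite_subset by blast
  define y where "y = (\<lambda>j l (X::nat \<Rightarrow> nat \<Rightarrow> bool). ind (X l j) - q j)"
  have sq: "(\<Sum>j\<in>T. real (cnt n X j) / n - q j)\<^sup>2 =
     (1/real n)\<^sup>2 * (\<Sum>j\<in>T. \<Sum>j'\<in>T. \<Sum>l\<in>{1..n}. \<Sum>l'\<in>{1..n}. y j l X * y j' l' X)" for X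
  proof -
    have "(\<Sum>j\<in>T. real (cnt n X j) / n - q j) = (1/real n) * (\<Sum>j\<in>T. \<Sum>l\<in>{1..n}. y j l X)"
      using n by (simp add: cnt_eq_sum y_def sum_subtractf sum_distrib_left field_simps
          sum_divide_distrib)
    moreover have "(\<Sum>j\<in>T. \<Sum>l\<in>{1..n}. y j l X) * (\<Sum>j\<in>T. \<Sum>l\<in>{1..n}. y j l X) =
        (\<Sum>j\<in>T. \<Sum>j'\<in>T. \<Sum>l\<in>{1..n}. \<Sum>l'\<in>{1..n}. y j l X * y j' l' X)"
      by (simp only: sum_product)
    ultimately show ?thesis by (simp add: power2_eq_square)
  qed
  have pair: "sample_expect N n q (\<lambda>X. y j l X * y j' l' X) = ind (l = l' \<and> j = j') * (q j * (1 - q j))"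
    if "j \<in> T" "j' \<in> T" "l \<in> {1..n}" "l' \<in> {1..n}" for j l j' l'
    using that T unfolding y_def
    by (subst sample_expect_pair[where f="\<lambda>b. ind b - q j" and g="\<lambda>b. ind b - q j'"])
       (auto simp: bern_mean_def algebra_simps)
  have "sample_expect N n q (\<lambda>X. (\<Sum>j\<in>T. real (cnt n X j) / n - q j)\<^sup>2) =
     (1/real n)\<^sup>2 * (\<Sum>j\<in>T. \<Sum>j'\<in>T. \<Sum>l\<in>{1..n}. \<Sum>l'\<in>{1..n}.
        ind (l = l' \<and> j = j') * (q j * (1 - q j)))"
    unfolding sq sample_expect_cmult sample_expect_sum by (simp add: pair)
  also have "\<dots> = (1/real n)\<^sup>2 * (\<Sum>j\<in>T. real n * (q j * (1 - q j)))"
  proof -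
    have "(\<Sum>l'\<in>{1..n}. ind (l = l' \<and> j = j') * w) = ind (j = j') * w"
      if "l \<in> {1..n}" for l j j' :: nat and w :: real
      using that by (cases "j = j'") (simp_all add: if_distrib[of "\<lambda>x. x * w"] sum.delta cong: if_cong)
    moreover have "(\<Sum>j'\<in>T. real n * (ind (j = j') * w)) = real n * w" if "j \<in> T" for j w
      using that finT
      by (simp add: if_distrib[of "\<lambda>x. x * w"] sum.delta' flip: sum_distrib_left cong: if_cong)
    ultimately show ?thesis by simp
  qed
  also have "\<dots> = (\<Sum>j\<in>T. q j * (1 - q j)) / n"
    using n by (simp add: sum_distrib_left[symmetric] power2_eq_square)
  finally show ?thesis .
qed

lemma Pq_centered_sum_ge:
  assumes q: "\<forall>j\<in>{1..N}. 0 \<le> q j \<and> q j \<le> 1" and T: "T \<subseteq> {1..N}" and n: "1 \<le> n"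
    and a: "0 < a"
  shows "Pq N n q (\<lambda>X. a \<le> \<bar>\<Sum>j\<in>T. real (cnt n X j) / n - q j\<bar>) \<le> (\<Sum>j\<in>T. q j) / (n * a\<^sup>2)"
proof -
  let ?Z = "\<lambda>X. \<Sum>j\<in>T. real (cnt n X j) / n - q j"
  have "Pq N n q (\<lambda>X. a \<le> \<bar>?Z X\<bar>) \<le> Pq N n q (\<lambda>X. a\<^sup>2 \<le> (?Z X)\<^sup>2)"
  proof (intro Pq_mono[OF q])
    fix X assume "a \<le> \<bar>?Z X\<bar>"
    then have "a\<^sup>2 \<le> \<bar>?Z X\<bar>\<^sup>2" using a by (intro power_mono) auto
    then show "a\<^sup>2 \<le> (?Z X)\<^sup>2" by simp
  qed
  also have "\<dots> \<le> sample_expect N n q (\<lambda>X. (?Z X)\<^sup>2) / a\<^sup>2"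
    using q a by (intro Pq_markov) auto
  also have "\<dots> \<le> (\<Sum>j\<in>T. q j) / n / a\<^sup>2"
    unfolding sample_expect_centered_sum_sq[OF T n] using q T
    by (intro divide_right_mono sum_mono) (auto simp: mult_left_le subsetD)
  finally show ?thesis by (simp add: field_simps)
qed

lemma sample_expect_count_pairs:
  assumes j: "j \<in> {1..N}"
  shows "sample_expect N n q (\<lambda>X. real (cnt n X j) * (real (cnt n X j) - 1))
    = real n * (real n - 1) * (q j)\<^sup>2"
proof -
  have eq: "real (cnt n X j) * (real (cnt n X j) - 1) =
     (\<Sum>l\<in>{1..n}. \<Sum>l'\<in>{1..n}. ind (X l j) * ind (X l' j)) + (- 1) * (\<Sum>l\<in>{1..n}. ind (X l j))"
    for X unfolding cnt_eq_sum by (simp add: sum_product algebra_simps)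
  have pair: "sample_expect N n q (\<lambda>X. ind (X l j) * ind (X l' j))
      = (q j)\<^sup>2 + ind (l = l') * (q j - (q j)\<^sup>2)" if "l \<in> {1..n}" "l' \<in> {1..n}" for l l'
    using that j by (subst sample_expect_pair[where f=ind and g=ind])
      (auto simp: bern_mean_def power2_eq_square)
  have single: "sample_expect N n q (\<lambda>X. ind (X l j)) = q j" if "l \<in> {1..n}" for l
    using sample_expect_single[OF that j, of q ind] by (simp add: bern_mean_def)
  have "sample_expect N n q (\<lambda>X. real (cnt n X j) * (real (cnt n X j) - 1))
      = (\<Sum>l\<in>{1..n}. \<Sum>l'\<in>{1..n}. sample_expect N n q (\<lambda>X. ind (X l j) * ind (X l' j)))
        + (- 1) * (\<Sum>l\<in>{1..n}. sample_expect N n q (\<lambda>X. ind (X l j)))"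
    unfolding eq sample_expect_add sample_expect_cmult sample_expect_sum ..
  also have "\<dots> = (\<Sum>l\<in>{1..n}. \<Sum>l'\<in>{1..n}. (q j)\<^sup>2 + ind (l = l') * (q j - (q j)\<^sup>2))
        + (- 1) * (\<Sum>l\<in>{1..n}. q j)"
    by (intro arg_cong2[where f="(+)"] arg_cong2[where f="(*)"] sum.cong refl)
      (simp_all add: pair single)
  also have "\<dots> = real n * (real n - 1) * (q j)\<^sup>2"
  proof -
    have "(\<Sum>l'\<in>{1..n}. (q j)\<^sup>2 + ind (l = l') * w) = real n * (q j)\<^sup>2 + w"
      if "l \<in> {1..n}" for l w
      using that by (simp add: sum.distrib if_distrib[of "\<lambda>x. x * w"] sum.delta cong: if_cong)
    then have "(\<Sum>l\<in>{1..n}. \<Sum>l'\<in>{1..n}. (q j)\<^sup>2 + ind (l = l') * (q j - (q j)\<^sup>2))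
        = real n * (real n * (q j)\<^sup>2 + (q j - (q j)\<^sup>2))"
      by simp
    then show ?thesis by (simp add: algebra_simps power2_eq_square)
  qed
  finally show ?thesis .
qed

lemma Pq_psi2_le:
  assumes q: "\<forall>j\<in>{1..N}. 0 \<le> q j \<and> q j \<le> 1"
  shows "Pq N n q (psi2 A N n) \<le> (real n)\<^sup>2 / 2 * (\<Sum>j\<in>{A<..N}. (q j)\<^sup>2)"
proof -
  let ?pairs = "\<lambda>X. \<Sum>j\<in>{A<..N}. real (cnt n X j) * (real (cnt n X j) - 1) / 2"
  have pairs_nonneg: "0 \<le> real k * (real k - 1)" for k :: nat by (cases k) auto
  have "Pq N n q (psi2 A N n) \<le> sample_expect N n q ?pairs"
  proof (rule Pq_le_sample_expect[OF q])
    fix X assume "psi2 A N n X"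
    then obtain j where j: "j \<in> {A<..N}" "2 \<le> cnt n X j" unfolding psi2_def by auto
    then have "2 * 1 \<le> real (cnt n X j) * (real (cnt n X j) - 1)"
      by (intro mult_mono) auto
    also have "\<dots> / 2 \<le> ?pairs X"
      using j pairs_nonneg by (intro member_le_sum) auto
    finally show "1 \<le> ?pairs X" by simp
  qed (use pairs_nonneg in \<open>auto intro: sum_nonneg\<close>)
  also have "\<dots> = (\<Sum>j\<in>{A<..N}. real n * (real n - 1) / 2 * (q j)\<^sup>2)"
    unfolding sample_expect_sum
    using sample_expect_cmult[of N n q "1/2"] sample_expect_count_pairs
    by (intro sum.cong refl) (simp add: field_simps)
  also have "\<dots> \<le> (\<Sum>j\<in>{A<..N}. (real n)\<^sup>2 / 2 * (q j)\<^sup>2)"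
    by (intro sum_mono mult_right_mono) (auto simp: power2_eq_square intro: mult_left_mono)
  finally show ?thesis by (simp add: sum_distrib_left)
qed

section \<open>Collisions between the two halves of the sample\<close>

lemma prod_ind: "finite J \<Longrightarrow> (\<Prod>j\<in>J. ind (P j)) = ind (\<forall>j\<in>J. P j)"
  by (induction J rule: finite_induct) auto

lemma prod_halves:
  fixes a b :: real
  shows "(\<Prod>l\<in>{1..2*m}. if l \<le> m then a else b) = a ^ m * b ^ m"
proof -
  have halves: "{1..2*m} = {1..m} \<union> {m<..2*m}" by auto
  have "(\<Prod>l\<in>{1..2*m}. if l \<le> m then a else b)
      = (\<Prod>l\<in>{1..m}. if l \<le> m then a else b) * (\<Prod>l\<in>{m<..2*m}. if l \<le> m then a else b)"
    unfolding halves by (rule prod.union_disjoint) auto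
  also have "\<dots> = (\<Prod>l\<in>{1..m}. a) * (\<Prod>l\<in>{m<..2*m}. b)"
    by (intro arg_cong2[where f="(*)"] prod.cong) auto
  finally show ?thesis by simp
qed

text \<open>A collision across the two halves implies \<open>N\<^sub>j \<ge> 2\<close>, and unlike \<open>N\<^sub>j \<ge> 2\<close> its
  probability has a closed form.\<close>
definition split_collision :: "nat \<Rightarrow> (nat \<Rightarrow> bool) \<Rightarrow> bool" where
  "split_collision m c \<longleftrightarrow> (\<exists>l\<in>{1..m}. c l) \<and> (\<exists>l\<in>{m<..2*m}. c l)"

text \<open>Inclusion-exclusion over the two halves of the sequence.\<close>
lemma seq_expect_no_split_collision:
  "seq_expect (2*m) x (\<lambda>c. ind (\<not> split_collision m c)) = 2 * (1 - x) ^ m - (1 - x) ^ (2*m)"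
proof -
  let ?ha = "\<lambda>l b. ind (l \<le> m \<longrightarrow> \<not> b)"
  let ?hb = "\<lambda>l b. ind (m < l \<longrightarrow> \<not> b)"
  let ?hc = "\<lambda>(l::nat) b. ind (\<not> b)"
  have "{1..2*m} = {1..m} \<union> {m<..2*m}" by auto
  then have "ind (\<not> split_collision m c) =
     (\<Prod>l\<in>{1..2*m}. ?ha l (c l)) + (\<Prod>l\<in>{1..2*m}. ?hb l (c l)) - (\<Prod>l\<in>{1..2*m}. ?hc l (c l))"
    for c unfolding split_collision_def by (simp add: prod_ind) auto
  then have "seq_expect (2*m) x (\<lambda>c. ind (\<not> split_collision m c)) =
     (\<Prod>l\<in>{1..2*m}. bern_mean x (?ha l)) + (\<Prod>l\<in>{1..2*m}. bern_mean x (?hb l))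
       - (\<Prod>l\<in>{1..2*m}. bern_mean x (?hc l))"
    by (simp only: seq_expect_add seq_expect_diff seq_expect_prod[of "2*m" x ?ha]
        seq_expect_prod[of "2*m" x ?hb] seq_expect_prod[of "2*m" x ?hc])
  also have "\<dots> = (\<Prod>l\<in>{1..2*m}. if l \<le> m then 1 - x else 1)
      + (\<Prod>l\<in>{1..2*m}. if l \<le> m then 1 else 1 - x) - (\<Prod>l\<in>{1..2*m}. 1 - x)"
    unfolding bern_mean_def
    by (intro arg_cong2[where f="(-)"] arg_cong2[where f="(+)"] prod.cong refl) auto
  also have "\<dots> = 2 * (1 - x) ^ m - (1 - x) ^ (2*m)"
    unfolding prod_halves by (simp add: power_mult mult.commute[of 2])
  finally show ?thesis .
qed

lemma Pq_no_split_collision: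
  "Pq N (2*m) q (\<lambda>X. \<forall>j\<in>{A<..N}. \<not> split_collision m (\<lambda>l. X l j))
     = (\<Prod>j\<in>{A<..N}. 2 * (1 - q j) ^ m - (1 - q j) ^ (2*m))"
proof -
  let ?G = "\<lambda>j c. if j \<in> {A<..N} then ind (\<not> split_collision m c) else 1"
  have "Pq N (2*m) q (\<lambda>X. \<forall>j\<in>{A<..N}. \<not> split_collision m (\<lambda>l. X l j))
     = sample_expect N (2*m) q (\<lambda>X. \<Prod>j\<in>{1..N}. ?G j (sample_columns N (2*m) X j))"
    unfolding Pq_eq_sample_expect
  proof (rule sample_expect_cong)
    fix X
    have "(\<Prod>j\<in>{1..N}. ?G j (sample_columns N (2*m) X j))
        = (\<Prod>j\<in>{1..N}. ind (j \<in> {A<..N} \<longrightarrow> \<not> split_collision m (\<lambda>l. X l j)))"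
      by (intro prod.cong refl) (auto simp: sample_columns_def split_collision_def)
    then show "ind (\<forall>j\<in>{A<..N}. \<not> split_collision m (\<lambda>l. X l j))
        = (\<Prod>j\<in>{1..N}. ?G j (sample_columns N (2*m) X j))"
      by (simp add: prod_ind)
  qed
  also have "\<dots> = (\<Prod>j\<in>{1..N}. seq_expect (2*m) (q j) (?G j))"
    by (rule sample_expect_prod_columns)
  also have "\<dots> = (\<Prod>j\<in>{1..N}. if j \<in> {A<..N} then 2 * (1 - q j) ^ m - (1 - q j) ^ (2*m) else 1)"
    using seq_expect_prod[of "2*m" _ "\<lambda>_ _. 1"] seq_expect_no_split_collision
    by (intro prod.cong refl) (simp add: bern_mean_def)
  also have "\<dots> = (\<Prod>j\<in>{A<..N}. 2 * (1 - q j) ^ m - (1 - q j) ^ (2*m))"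
  proof -
    have "{1..N} \<inter> {A<..N} = {A<..N}" by auto
    then show ?thesis by (subst prod.inter_restrict[symmetric]) simp_all
  qed
  finally show ?thesis .
qed

lemma one_minus_power_le_exp:
  fixes x :: real assumes "0 \<le> x" "x \<le> 1"
  shows "(1 - x) ^ m \<le> exp (- (real m * x))"
proof -
  have "(1 - x) ^ m \<le> exp (- x) ^ m"
    using assms exp_ge_add_one_self[of "-x"] by (intro power_mono) auto
  then show ?thesis by (simp add: exp_of_nat_mult[symmetric])
qed

lemma mult_exp_le_one_minus_exp:
  fixes x L :: real assumes "0 \<le> x" "x \<le> L"
  shows "x * exp (- L) \<le> 1 - exp (- x)"
proof -
  have "x * exp (- L) \<le> x * exp (- x)" using assms by (intro mult_left_mono) auto
  also have "(1 + x) * exp (- x) \<le> exp x * exp (- x)"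
    using exp_ge_add_one_self[of x] by (intro mult_right_mono) auto
  then have "x * exp (- x) \<le> 1 - exp (- x)" by (simp add: algebra_simps exp_minus_inverse)
  finally show ?thesis .
qed

lemma exp_neg_le_inverse:
  fixes y :: real assumes "0 < y"
  shows "exp (- y) \<le> 1 / y"
proof -
  have "y \<le> exp y" using exp_ge_add_one_self[of y] by linarith
  then have "y * exp (- y) \<le> exp y * exp (- y)" by (intro mult_right_mono) auto
  then show ?thesis using assms by (simp add: field_simps exp_minus_inverse)
qed

lemma no_collision_factor_eq:
  fixes x :: real
  shows "2 * (1 - x) ^ m - (1 - x) ^ (2*m) = 1 - (1 - (1 - x) ^ m)\<^sup>2"
  by (simp add: power_mult mult.commute[of 2 m] power2_eq_square algebra_simps)

lemma no_collision_factor_bounds: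
  fixes x :: real assumes "0 \<le> x" "x \<le> 1"
  shows "0 \<le> 2 * (1 - x) ^ m - (1 - x) ^ (2*m)" "2 * (1 - x) ^ m - (1 - x) ^ (2*m) \<le> 1"
    and "2 * (1 - x) ^ m - (1 - x) ^ (2*m) \<le> 2 * exp (- (real m * x))"
proof -
  define a where "a = (1 - x) ^ m"
  have a: "0 \<le> a" "a \<le> 1" unfolding a_def using assms by (auto intro: power_le_one)
  have f: "2 * (1 - x) ^ m - (1 - x) ^ (2*m) = a * (2 - a)"
    unfolding a_def by (simp add: power_mult mult.commute[of 2 m] power2_eq_square algebra_simps)
  show "0 \<le> 2 * (1 - x) ^ m - (1 - x) ^ (2*m)" unfolding f using a by simp
  show "2 * (1 - x) ^ m - (1 - x) ^ (2*m) \<le> 1"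
    unfolding f using zero_le_power2[of "1 - a"] by (simp add: power2_eq_square algebra_simps)
  have "a \<le> exp (- (real m * x))" unfolding a_def using assms by (rule one_minus_power_le_exp)
  then show "2 * (1 - x) ^ m - (1 - x) ^ (2*m) \<le> 2 * exp (- (real m * x))"
    unfolding f using a mult_left_mono[of "2 - a" 2 a] by linarith
qed

lemma no_collision_factor_le_exp:
  fixes x L :: real assumes "0 \<le> x" "x \<le> 1" "real m * x \<le> L"
  shows "2 * (1 - x) ^ m - (1 - x) ^ (2*m) \<le> exp (- (exp (- L) * real m * x)\<^sup>2)"
proof -
  have "exp (- L) * real m * x \<le> 1 - exp (- (real m * x))"
    using mult_exp_le_one_minus_exp[of "real m * x" L] assms by (simp add: ac_simps)
  also have "\<dots> \<le> 1 - (1 - x) ^ m" using assms by (simp add: one_minus_power_le_exp)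
  finally have "(exp (- L) * real m * x)\<^sup>2 \<le> (1 - (1 - x) ^ m)\<^sup>2"
    using assms by (intro power_mono) auto
  then have "2 * (1 - x) ^ m - (1 - x) ^ (2*m) \<le> 1 + - (exp (- L) * real m * x)\<^sup>2"
    unfolding no_collision_factor_eq by simp
  also have "\<dots> \<le> exp (- (exp (- L) * real m * x)\<^sup>2)" by (rule exp_ge_add_one_self)
  finally show ?thesis .
qed

text \<open>Either one coordinate alone makes a collision likely (\<open>m q\<^sub>j \<ge> 4/\<eta>\<close>), or all
  \<open>m q\<^sub>j\<close> are bounded and the factors multiply up to \<open>exp (-c m\<^sup>2 \<Sum> q\<^sub>j\<^sup>2)\<close>.\<close>
lemma prod_no_collision_le:
  fixes \<eta> :: real
  assumes \<eta>: "0 < \<eta>" and m: "1 \<le> m" and T: "finite T"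
    and q: "\<forall>j\<in>T. 0 \<le> q j \<and> q j \<le> 1"
    and sq: "8 / (\<eta> * exp (- (4/\<eta>)) ^ 2) / (2 * real m)\<^sup>2 \<le> (\<Sum>j\<in>T. (q j)\<^sup>2)"
  shows "(\<Prod>j\<in>T. 2 * (1 - q j) ^ m - (1 - q j) ^ (2*m)) \<le> \<eta> / 2"
proof (cases "\<exists>j\<in>T. 4 / \<eta> \<le> real m * q j")
  case True
  then obtain j where j: "j \<in> T" "4 / \<eta> \<le> real m * q j" by blast
  have "(\<Prod>j\<in>T. 2 * (1 - q j) ^ m - (1 - q j) ^ (2*m))
      \<le> 2 * (1 - q j) ^ m - (1 - q j) ^ (2*m)"
    using T j q no_collision_factor_bounds
    by (subst prod.remove[OF T j(1)]) (auto intro!: mult_left_le prod_le_1 prod_nonneg)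
  also have "\<dots> \<le> 2 * exp (- (real m * q j))"
    using q j by (intro no_collision_factor_bounds) auto
  also have "\<dots> \<le> 2 * exp (- (4 / \<eta>))" using j by simp
  also have "\<dots> \<le> 2 * (1 / (4 / \<eta>))" using \<eta> exp_neg_le_inverse[of "4/\<eta>"] by simp
  finally show ?thesis by simp
next
  case False
  define \<kappa> where "\<kappa> = exp (- (4/\<eta>))"
  have "(\<Prod>j\<in>T. 2 * (1 - q j) ^ m - (1 - q j) ^ (2*m)) \<le> (\<Prod>j\<in>T. exp (- (\<kappa> * real m * q j)\<^sup>2))"
    unfolding \<kappa>_def using q False no_collision_factor_bounds(1)
    by (intro prod_mono) (auto intro!: no_collision_factor_le_exp simp: not_le)
  also have "\<dots> = exp (- (\<kappa>\<^sup>2 * (real m)\<^sup>2 * (\<Sum>j\<in>T. (q j)\<^sup>2)))"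
    using T by (simp add: exp_sum[symmetric] sum_negf sum_distrib_left power_mult_distrib)
  also have "\<dots> \<le> exp (- (\<kappa>\<^sup>2 * (real m)\<^sup>2 * (8 / (\<eta> * \<kappa>\<^sup>2) / (2 * real m)\<^sup>2)))"
  proof -
    have "\<kappa>\<^sup>2 * (real m)\<^sup>2 * (8 / (\<eta> * \<kappa>\<^sup>2) / (2 * real m)\<^sup>2)
        \<le> \<kappa>\<^sup>2 * (real m)\<^sup>2 * (\<Sum>j\<in>T. (q j)\<^sup>2)"
      using sq unfolding \<kappa>_def by (intro mult_left_mono) auto
    then show ?thesis by simp
  qed
  also have "\<dots> = exp (- (2 / \<eta>))"
    using m \<eta> unfolding \<kappa>_def by (simp add: field_simps power2_eq_square)
  also have "\<dots> \<le> \<eta> / 2" using \<eta> exp_neg_le_inverse[of "2/\<eta>"] by simp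
  finally show ?thesis .
qed

section \<open>The coordinates beyond \<open>A\<close> under the null\<close>

lemma pow0_pos: "0 < x \<Longrightarrow> pow0 x a = x powr a"
  unfolding pow0_def by simp

lemma I_idx_spec:
  assumes "0 \<le> cI"
  shows "I_idx cI N n p \<le> N" "(\<Sum>i\<in>{I_idx cI N n p<..N}. (p i)\<^sup>2) \<le> cI / (real n)\<^sup>2"
proof -
  have "\<exists>J. J \<le> N \<and> (\<Sum>i\<in>{J<..N}. (p i)\<^sup>2) \<le> cI / (real n)\<^sup>2"
    using assms by (intro exI[of _ N]) auto
  from LeastI_ex[OF this] show "I_idx cI N n p \<le> N"
    "(\<Sum>i\<in>{I_idx cI N n p<..N}. (p i)\<^sup>2) \<le> cI / (real n)\<^sup>2"
    unfolding I_idx_def by auto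
qed

lemma A_idx_spec:
  fixes t cI cA :: real and N n :: nat and p :: "nat \<Rightarrow> real"
  defines "I \<equiv> I_idx cI N n p" and "A \<equiv> A_idx t cI cA N n p"
  shows "A \<le> I"
    and "\<And>j. j \<in> {A<..I} \<Longrightarrow> pow0 (p j) (b_of t / 2)
           < cA / (sqrt (real n) * (\<Sum>i\<in>{1..I}. p i powr r_of t) powr (1/4))"
proof -
  define S where "S = {a\<in>{1..I}. pow0 (p a) (b_of t / 2)
               \<ge> cA / (sqrt (real n) * (\<Sum>i\<in>{1..I}. p i powr r_of t) powr (1/4))}"
  have A: "A = (if S = {} then 0 else Max S)"
    unfolding A_def A_idx_def Let_def S_def I_def by simp
  have fin: "finite S" unfolding S_def by auto
  show "A \<le> I"
    using Max_in[OF fin] unfolding A by (auto simp: S_def)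
  fix j assume j: "j \<in> {A<..I}"
  have "j \<notin> S"
  proof
    assume "j \<in> S"
    then have "S \<noteq> {}" "j \<le> Max S" using Max_ge[OF fin] by auto
    then show False using j unfolding A by simp
  qed
  then show "pow0 (p j) (b_of t / 2)
      < cA / (sqrt (real n) * (\<Sum>i\<in>{1..I}. p i powr r_of t) powr (1/4))"
    using j unfolding S_def by auto
qed

lemma two_b_of_plus_r_of:
  assumes "t \<noteq> 4"
  shows "2 * b_of t + r_of t = 2"
proof -
  have "2 * b_of t + r_of t = (2 * (4 - 2 * t) + 2 * t) / (4 - t)"
    unfolding b_of_def r_of_def by argo
  also have "\<dots> = 2 * (4 - t) / (4 - t)" by (simp add: algebra_simps)
  also have "\<dots> = 2" using assms by (intro nonzero_mult_div_cancel_right) simp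
  finally show ?thesis .
qed

text \<open>The exponents satisfy \<open>2 b + r = 2\<close>, so \<open>x\<^sup>2 = (x\<^bsup>b/2\<^esup>)\<^sup>4 x\<^sup>r\<close>.\<close>
lemma sq_le_of_powr_b_of_less:
  fixes x c R :: real
  assumes x: "0 < x" and t: "t \<noteq> 4" and R: "0 < R" and n: "0 < n"
    and less: "x powr (b_of t / 2) < c / (sqrt n * R powr (1/4))"
  shows "x\<^sup>2 \<le> c ^ 4 / (n\<^sup>2 * R) * x powr r_of t"
proof -
  have "x powr (2 * b_of t) = (x powr (b_of t / 2)) ^ 4"
    using x by (subst powr_power) auto
  also have "\<dots> \<le> (c / (sqrt n * R powr (1/4))) ^ 4"
    using less x by (intro power_mono) auto
  also have "\<dots> = c ^ 4 / (n\<^sup>2 * R)"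
  proof -
    have "(sqrt n) ^ 4 = ((sqrt n)\<^sup>2)\<^sup>2" by (simp flip: power_mult)
    also have "\<dots> = n\<^sup>2" using n by simp
    finally have "(sqrt n) ^ 4 = n\<^sup>2" .
    moreover have "(R powr (1/4)) ^ 4 = R" using R by (subst powr_power) auto
    ultimately show ?thesis by (simp add: power_divide power_mult_distrib)
  qed
  finally have "x powr (2 * b_of t) * x powr r_of t \<le> c ^ 4 / (n\<^sup>2 * R) * x powr r_of t"
    by (intro mult_right_mono) auto
  moreover have "x\<^sup>2 = x powr (2 * b_of t) * x powr r_of t"
    using x two_b_of_plus_r_of[OF t] by (simp add: powr_add[symmetric] powr_numeral)
  ultimately show ?thesis by simp
qed

text \<open>Beyond \<open>I\<close> the squares sum to at most \<open>c\<^sub>I/n\<^sup>2\<close> by definition of \<open>I\<close>;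
  on \<open>A < j \<le> I\<close> each \<open>p\<^sub>j\<^sup>2\<close> is at most \<open>c\<^sub>A\<^sup>4 p\<^sub>j\<^sup>r/(n\<^sup>2 \<Sum>\<^sub>i\<^sub>\<le>\<^sub>I p\<^sub>i\<^sup>r)\<close>
  by definition of \<open>A\<close>.\<close>
lemma sum_sq_beyond_A_le:
  assumes p: "\<forall>j\<in>{1..N}. 0 \<le> p j" and t: "t \<noteq> 4" and cI: "0 \<le> cI" and n: "1 \<le> n"
  shows "(\<Sum>i\<in>{A_idx t cI cA N n p<..N}. (p i)\<^sup>2) \<le> (cI + cA ^ 4) / (real n)\<^sup>2"
proof -
  define I where "I = I_idx cI N n p"
  define A where "A = A_idx t cI cA N n p"
  define R where "R = (\<Sum>i\<in>{1..I}. p i powr r_of t)"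
  have IN: "I \<le> N" and tail_I: "(\<Sum>i\<in>{I<..N}. (p i)\<^sup>2) \<le> cI / (real n)\<^sup>2"
    using I_idx_spec[OF cI, where N=N and n=n and p=p] unfolding I_def by auto
  have AI: "A \<le> I" and less: "\<And>j. j \<in> {A<..I} \<Longrightarrow>
      pow0 (p j) (b_of t / 2) < cA / (sqrt (real n) * R powr (1/4))"
    using A_idx_spec[where t=t and cI=cI and cA=cA and N=N and n=n and p=p] unfolding A_def I_def R_def by auto
  have mid: "(\<Sum>i\<in>{A<..I}. (p i)\<^sup>2) \<le> cA ^ 4 / (real n)\<^sup>2"
  proof (cases "{A<..I} = {}")
    case False
    then obtain j0 where j0: "j0 \<in> {A<..I}" by blast
    have "0 \<le> pow0 (p j0) (b_of t / 2)"
      using j0 IN p unfolding pow0_def by auto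
    then have "R \<noteq> 0" using less[OF j0] by auto
    then have R: "0 < R" unfolding R_def by (metis sum_nonneg powr_ge_zero order_le_less)
    have each: "(p j)\<^sup>2 \<le> cA ^ 4 / ((real n)\<^sup>2 * R) * p j powr r_of t" if j: "j \<in> {A<..I}" for j
    proof (cases "p j = 0")
      case False
      then have pos: "0 < p j" using j IN p by (auto simp: order_le_less)
      with less[OF j] have "p j powr (b_of t / 2) < cA / (sqrt (real n) * R powr (1/4))"
        by (simp add: pow0_pos)
      then show ?thesis using sq_le_of_powr_b_of_less[OF pos t R] n by simp
    qed simp
    have "(\<Sum>i\<in>{A<..I}. (p i)\<^sup>2) \<le> (\<Sum>i\<in>{A<..I}. cA ^ 4 / ((real n)\<^sup>2 * R) * p i powr r_of t)"
      using each by (rule sum_mono)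
    also have "\<dots> = cA ^ 4 / ((real n)\<^sup>2 * R) * (\<Sum>i\<in>{A<..I}. p i powr r_of t)"
      by (simp add: sum_distrib_left)
    also have "\<dots> \<le> cA ^ 4 / ((real n)\<^sup>2 * R) * R"
      unfolding R_def using R by (intro mult_left_mono sum_mono2) (auto simp: R_def)
    finally show ?thesis using R by simp
  qed simp
  have "{A<..N} = {A<..I} \<union> {I<..N}" using AI IN by auto
  then have "(\<Sum>i\<in>{A<..N}. (p i)\<^sup>2) = (\<Sum>i\<in>{A<..I}. (p i)\<^sup>2) + (\<Sum>i\<in>{I<..N}. (p i)\<^sup>2)"
    by (simp add: sum.union_disjoint)
  also have "\<dots> \<le> (cI + cA ^ 4) / (real n)\<^sup>2" using mid tail_I by (simp add: add_divide_distrib)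
  finally show ?thesis unfolding A_def .
qed

section \<open>Interpolating the \<open>\<ell>\<^sub>t\<close> norm\<close>

lemma sqrt_div_le_max:
  fixes P :: real and n :: nat assumes "0 \<le> P" "1 \<le> n"
  shows "sqrt (P / real n) \<le> max P (1 / real n)"
proof -
  let ?u = "max P (1 / real n)"
  have "P / real n \<le> ?u * ?u" using assms by (intro mult_mono[of P _ "1 / real n", simplified]) auto
  then have "sqrt (P / real n) \<le> sqrt (?u * ?u)" by (rule real_sqrt_le_mono)
  also have "\<dots> = ?u" using assms by (simp add: abs_of_nonneg le_max_iff_disj)
  finally show ?thesis .
qed

lemma powr_inverse_le_of_le_mult_powr:
  fixes x c H t :: real
  assumes x: "0 \<le> x" and c: "1 \<le> c" and H: "0 \<le> H" and t: "1 \<le> t" and le: "x \<le> c * H powr t"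
  shows "x powr (1 / t) \<le> c * H"
proof -
  have "x powr (1 / t) \<le> (c * H powr t) powr (1 / t)" using x le t by (intro powr_mono2) auto
  also have "\<dots> = c powr (1 / t) * H" using c H t by (simp add: powr_mult powr_powr)
  also have "c powr (1 / t) \<le> c powr 1" using c t by (intro powr_mono) auto
  then have "c powr (1 / t) * H \<le> c * H" using c H by (intro mult_right_mono) auto
  finally show ?thesis .
qed

text \<open>Young's inequality with exponents \<open>1/(2-t)\<close> and \<open>1/(t-1)\<close> interpolates \<open>x\<^sup>t\<close>
  between \<open>x\<close> and \<open>x\<^sup>2\<close>; the weight \<open>\<lambda>\<close> balances the two terms.\<close>
lemma powr_le_linear_plus_sq:
  fixes x lam t :: real
  assumes x: "0 \<le> x" and lam: "0 < lam" and t: "1 \<le> t" "t \<le> 2"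
  shows "x powr t \<le> lam powr (t - 1) * x + lam powr (t - 2) * x\<^sup>2"
proof (cases "x = 0")
  case True then show ?thesis using t by simp
next
  case False
  then have x: "0 < x" using x by simp
  define u where "u = lam powr (t - 1) * x"
  define v where "v = lam powr (t - 2) * x\<^sup>2"
  have uv: "0 < u" "0 < v" unfolding u_def v_def using x lam by simp_all
  have "u powr (2 - t) = lam powr ((t - 1) * (2 - t)) * x powr (2 - t)"
    unfolding u_def using x lam by (simp add: powr_mult powr_powr)
  moreover have "v powr (t - 1) = lam powr ((t - 2) * (t - 1)) * x powr (2 * (t - 1))"
    unfolding v_def using x lam by (simp add: powr_mult powr_powr flip: powr_numeral)
  ultimately have "u powr (2 - t) * v powr (t - 1)
      = lam powr ((t - 1) * (2 - t) + (t - 2) * (t - 1)) * x powr ((2 - t) + 2 * (t - 1))"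
    by (simp only: powr_add mult_ac)
  also have "\<dots> = x powr t" using lam by (simp add: algebra_simps)
  finally have "x powr t = u powr (2 - t) * v powr (t - 1)" ..
  also have "\<dots> \<le> (2 - t) * u + (t - 1) * v"
    using t uv by (intro Youngs_inequality_0) auto
  also have "\<dots> \<le> u + v"
    using t uv by (intro add_mono) (auto simp: mult_left_le_one_le)
  finally show ?thesis unfolding u_def v_def .
qed

lemma powr_scale_eqs:
  fixes u \<nu> t :: real assumes u: "0 < u" and \<nu>: "0 < \<nu>"
  shows "(1 / (\<nu>\<^sup>2 * u)) powr (t - 1) * u = u powr (2 - t) / \<nu> powr (2 * t - 2)"
    and "(1 / (\<nu>\<^sup>2 * u)) powr (t - 2) / \<nu>\<^sup>2 = u powr (2 - t) / \<nu> powr (2 * t - 2)"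
proof -
  have pw: "(1 / (\<nu>\<^sup>2 * u)) powr s = 1 / (\<nu> powr (2 * s) * u powr s)" for s
    using u \<nu> by (simp add: powr_divide powr_mult powr_powr flip: powr_numeral)
  have "(1 / (\<nu>\<^sup>2 * u)) powr (t - 1) * u = (u powr 1 / u powr (t - 1)) / \<nu> powr (2 * (t - 1))"
    unfolding pw using u by simp
  also have "u powr 1 / u powr (t - 1) = u powr (2 - t)"
    using powr_diff[of u 1 "t - 1"] by simp
  finally show "(1 / (\<nu>\<^sup>2 * u)) powr (t - 1) * u = u powr (2 - t) / \<nu> powr (2 * t - 2)"
    by (simp add: algebra_simps)
  have "\<nu> powr (2 * (t - 2)) * \<nu>\<^sup>2 = \<nu> powr (2 * t - 2)"
    using \<nu> by (simp add: powr_add[symmetric] algebra_simps flip: powr_numeral)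
  moreover have "1 / u powr (t - 2) = u powr (2 - t)"
    by (simp add: powr_minus_divide[symmetric])
  ultimately show "(1 / (\<nu>\<^sup>2 * u)) powr (t - 2) / \<nu>\<^sup>2 = u powr (2 - t) / \<nu> powr (2 * t - 2)"
    unfolding pw by (metis divide_divide_eq_left mult.commute)
qed

lemma sum_powr_le_of_sum_and_sum_sq:
  fixes d :: "nat \<Rightarrow> real" and a b u t :: real and n :: nat
  assumes t: "1 \<le> t" "t \<le> 2" and n: "1 \<le> n" and u: "0 < u" and d: "\<forall>j\<in>T. 0 \<le> d j"
    and l1: "(\<Sum>j\<in>T. d j) \<le> a * u" and l2: "(\<Sum>j\<in>T. (d j)\<^sup>2) \<le> b / (real n)\<^sup>2"
  shows "(\<Sum>j\<in>T. d j powr t) \<le> (a + b) * (u powr (2 - t) / real n powr (2 * t - 2))"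
proof -
  define lam where "lam = 1 / ((real n)\<^sup>2 * u)"
  have lam: "0 < lam" unfolding lam_def using u n by simp
  have "(\<Sum>j\<in>T. d j powr t) \<le> (\<Sum>j\<in>T. lam powr (t - 1) * d j + lam powr (t - 2) * (d j)\<^sup>2)"
    using d lam t by (intro sum_mono powr_le_linear_plus_sq) auto
  also have "\<dots> = lam powr (t - 1) * (\<Sum>j\<in>T. d j) + lam powr (t - 2) * (\<Sum>j\<in>T. (d j)\<^sup>2)"
    by (simp add: sum.distrib sum_distrib_left)
  also have "\<dots> \<le> lam powr (t - 1) * (a * u) + lam powr (t - 2) * (b / (real n)\<^sup>2)"
    using l1 l2 by (intro add_mono mult_left_mono) auto
  also have "\<dots> = a * (lam powr (t - 1) * u) + b * (lam powr (t - 2) / (real n)\<^sup>2)"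
    by (simp add: algebra_simps)
  also have "\<dots> = (a + b) * (u powr (2 - t) / real n powr (2 * t - 2))"
  proof -
    have "0 < real n" using n by simp
    note scale = powr_scale_eqs[OF u this, of t]
    show ?thesis unfolding lam_def scale by (simp add: algebra_simps add_divide_distrib)
  qed
  finally show ?thesis .
qed

lemma max_powr_scale_le_rate_powr:
  fixes P t :: real and n :: nat
  assumes P: "0 \<le> P" and t: "1 \<le> t" "t \<le> 2" and n: "1 \<le> n"
  shows "max P (1 / real n) powr (2 - t) / real n powr (2 * t - 2)
    \<le> (pow0 P ((2 - t) / t) / real n powr ((2 * t - 2) / t) + 1 / real n) powr t"
proof -
  define H where "H = pow0 P ((2 - t) / t) / real n powr ((2 * t - 2) / t) + 1 / real n"
  have n0: "0 < real n" using n by simp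
  have first: "0 \<le> pow0 P ((2 - t) / t) / real n powr ((2 * t - 2) / t)"
    using P unfolding pow0_def by simp
  show ?thesis
  proof (cases "P \<le> 1 / real n")
    case True
    have "max P (1 / real n) powr (2 - t) / real n powr (2 * t - 2) = (1 / real n) powr t"
      using True n0 by (simp add: powr_divide powr_add[symmetric] field_simps flip: powr_minus_divide)
    also have "\<dots> \<le> H powr t"
      unfolding H_def using first t n0 by (intro powr_mono2) auto
    finally show ?thesis unfolding H_def .
  next
    case False
    then have P0: "0 < P" using n0 by (smt (verit) divide_pos_pos)
    have "max P (1 / real n) powr (2 - t) / real n powr (2 * t - 2)
        = (P powr ((2 - t) / t) / real n powr ((2 * t - 2) / t)) powr t"
      using False P0 n0 t by (simp add: powr_divide powr_powr)
    also have "\<dots> \<le> H powr t"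
      unfolding H_def using first t n0 P0 by (intro powr_mono2) (auto simp: pow0_pos)
    finally show ?thesis unfolding H_def .
  qed
qed

lemma abs_powr_eq_pos_part_plus_neg_part:
  fixes x t :: real assumes "0 < t"
  shows "\<bar>x\<bar> powr t = max x 0 powr t + max (- x) 0 powr t"
  using assms by (cases "x \<ge> 0") (auto simp: max_def)

text \<open>The positive part of \<open>q - p\<close> is controlled in \<open>\<ell>\<^sub>1\<close> by the mean shift and in
  \<open>\<ell>\<^sub>2\<close> by \<open>\<Sum> q\<^sub>j\<^sup>2\<close>, the negative part by \<open>\<Sum> p\<^sub>j\<close> and \<open>\<Sum> p\<^sub>j\<^sup>2\<close>.\<close>
lemma sum_abs_diff_powr_le:
  fixes p q :: "nat \<Rightarrow> real" and T :: "nat set" and a K t :: real and n :: nat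
  defines "u \<equiv> max (\<Sum>j\<in>T. p j) (1 / real n)"
  assumes t: "1 \<le> t" "t \<le> 2" and n: "1 \<le> n" and pq: "\<forall>j\<in>T. 0 \<le> p j \<and> 0 \<le> q j"
    and shift: "(\<Sum>j\<in>T. q j - p j) \<le> a * u"
    and p_sq: "(\<Sum>j\<in>T. (p j)\<^sup>2) \<le> 1 / (real n)\<^sup>2"
    and q_sq: "(\<Sum>j\<in>T. (q j)\<^sup>2) \<le> K / (real n)\<^sup>2"
  shows "(\<Sum>j\<in>T. \<bar>q j - p j\<bar> powr t) \<le> (a + K + 3) * (u powr (2 - t) / real n powr (2 * t - 2))"
proof -
  define B where "B = u powr (2 - t) / real n powr (2 * t - 2)"
  define pos where "pos = (\<lambda>j. max (q j - p j) 0)"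
  define neg where "neg = (\<lambda>j. max (- (q j - p j)) 0)"
  have u: "0 < u" "(\<Sum>j\<in>T. p j) \<le> u" unfolding u_def using n by (auto intro: max.strict_coboundedI2)
  have neg_le: "neg j \<le> p j" and pos_le: "pos j \<le> q j" if "j \<in> T" for j
    unfolding pos_def neg_def using pq that by auto
  have sq_le: "(\<Sum>j\<in>T. (f j)\<^sup>2) \<le> (\<Sum>j\<in>T. (g j)\<^sup>2)"
    if "\<And>j. j \<in> T \<Longrightarrow> 0 \<le> f j \<and> f j \<le> g j" for f g :: "nat \<Rightarrow> real"
    using that by (intro sum_mono power_mono) auto
  have "(\<Sum>j\<in>T. pos j) = (\<Sum>j\<in>T. q j - p j) + (\<Sum>j\<in>T. neg j)"
    unfolding pos_def neg_def by (simp add: sum.distrib[symmetric] max_def) (intro sum.cong, auto)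
  also have "\<dots> \<le> a * u + u" using shift u sum_mono[of T neg p] neg_le by fastforce
  finally have pos_l1: "(\<Sum>j\<in>T. pos j) \<le> (a + 1) * u" by (simp add: algebra_simps)
  have neg_l1: "(\<Sum>j\<in>T. neg j) \<le> 1 * u" using u sum_mono[of T neg p] neg_le by fastforce
  have "(\<Sum>j\<in>T. pos j powr t) \<le> (a + 1 + K) * B"
    using sq_le[of pos q] pos_le q_sq pos_l1 t n u
    unfolding B_def by (intro sum_powr_le_of_sum_and_sum_sq) (auto simp: pos_def)
  moreover have "(\<Sum>j\<in>T. neg j powr t) \<le> (1 + 1) * B"
    using sq_le[of neg p] neg_le p_sq neg_l1 t n u
    unfolding B_def by (intro sum_powr_le_of_sum_and_sum_sq) (auto simp: neg_def)
  moreover have "(\<Sum>j\<in>T. \<bar>q j - p j\<bar> powr t) = (\<Sum>j\<in>T. pos j powr t) + (\<Sum>j\<in>T. neg j powr t)"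
    unfolding pos_def neg_def using t by (simp add: abs_powr_eq_pos_part_plus_neg_part sum.distrib)
  moreover have "(a + 1 + K) * B + (1 + 1) * B = (a + K + 3) * B" by (simp add: algebra_simps)
  ultimately show ?thesis unfolding B_def by linarith
qed

section \<open>Size and power of the combined test\<close>

lemma T1_eq_centered_sum_plus_shift:
  "T1 A N n p X = (\<Sum>j\<in>{A<..N}. real (cnt n X j) / real n - q j) + (\<Sum>j\<in>{A<..N}. q j - p j)"
  unfolding T1_def by (simp add: sum.distrib[symmetric])

lemma Pq_psi1_null_le:
  assumes \<eta>: "0 < \<eta>" and n: "1 \<le> n" and p: "\<forall>j\<in>{1..N}. 0 \<le> p j \<and> p j \<le> 1"
  shows "Pq N n p (psi1 \<eta> A N n p) \<le> \<eta> / 16"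
proof -
  define P where "P = (\<Sum>j\<in>{A<..N}. p j)"
  define Z where "Z = (\<lambda>X. \<Sum>j\<in>{A<..N}. real (cnt n X j) / real n - p j)"
  have T1: "T1 A N n p X = Z X" for X unfolding Z_def T1_def ..
  have sub: "{A<..N} \<subseteq> {1..N}" by auto
  have P0: "0 \<le> P" unfolding P_def using p sub by (intro sum_nonneg) (auto simp: subsetD)
  show ?thesis
  proof (cases "P = 0")
    case True
    have "(\<Sum>j\<in>{A<..N}. p j * (1 - p j)) = 0"
      using True p sub sum_nonneg_eq_0_iff[of "{A<..N}" p]
      unfolding P_def by (auto simp: subsetD)
    then have "sample_expect N n p (\<lambda>X. (Z X)\<^sup>2) = 0"
      unfolding Z_def sample_expect_centered_sum_sq[OF sub n] by simp
    then have "Pq N n p (\<lambda>X. 0 < (Z X)\<^sup>2) = 0" using p by (intro Pq_pos_eq_0) auto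
    moreover have "Pq N n p (psi1 \<eta> A N n p) \<le> Pq N n p (\<lambda>X. 0 < (Z X)\<^sup>2)"
      using p by (rule Pq_mono) (auto simp: psi1_def T1 P_def[symmetric] True)
    ultimately show ?thesis using \<eta> by simp
  next
    case False
    define \<tau> where "\<tau> = 4 / sqrt \<eta> * sqrt (P / real n)"
    have \<tau>: "0 < \<tau>" unfolding \<tau>_def using False P0 n \<eta> by simp
    have "Pq N n p (psi1 \<eta> A N n p) \<le> Pq N n p (\<lambda>X. \<tau> \<le> \<bar>Z X\<bar>)"
      using p by (rule Pq_mono) (auto simp: psi1_def T1 \<tau>_def P_def)
    also have "\<dots> \<le> P / (real n * \<tau>\<^sup>2)"
      unfolding Z_def P_def by (rule Pq_centered_sum_ge[OF p sub n \<tau>])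
    also have "\<dots> = \<eta> / 16"
      unfolding \<tau>_def using False P0 n \<eta> by (simp add: power_mult_distrib power_divide)
    finally show ?thesis .
  qed
qed

text \<open>Off \<open>\<psi>\<^sub>1\<close> the statistic centred at \<open>q\<close> must deviate by at least \<open>D - \<tau> \<ge> D/2\<close>.\<close>
lemma Pq_not_psi1_le:
  fixes \<eta> :: real and A N n :: nat and p q :: "nat \<Rightarrow> real"
  defines "P \<equiv> \<Sum>j\<in>{A<..N}. p j" and "D \<equiv> \<Sum>j\<in>{A<..N}. q j - p j"
  assumes \<eta>: "0 < \<eta>" and n: "1 \<le> n" and q: "\<forall>j\<in>{1..N}. 0 \<le> q j \<and> q j \<le> 1"
    and p: "\<forall>j\<in>{1..N}. 0 \<le> p j"
    and shift: "2 * (4 / sqrt \<eta> * sqrt (P / real n)) \<le> D" "16 / (\<eta> * real n) \<le> D"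
  shows "Pq N n q (\<lambda>X. \<not> psi1 \<eta> A N n p X) \<le> \<eta> / 2"
proof -
  define \<tau> where "\<tau> = 4 / sqrt \<eta> * sqrt (P / real n)"
  define Z where "Z = (\<lambda>X. \<Sum>j\<in>{A<..N}. real (cnt n X j) / real n - q j)"
  have sub: "{A<..N} \<subseteq> {1..N}" by auto
  have n0: "0 < real n" using n by simp
  have P0: "0 \<le> P" unfolding P_def using p sub by (intro sum_nonneg) (auto simp: subsetD)
  have \<tau>0: "0 \<le> \<tau>" unfolding \<tau>_def using P0 n0 \<eta> by simp
  have D0: "0 < D" using shift(2) \<eta> n0 by (smt (verit) divide_pos_pos mult_pos_pos)
  have "Pq N n q (\<lambda>X. \<not> psi1 \<eta> A N n p X) \<le> Pq N n q (\<lambda>X. D / 2 \<le> \<bar>Z X\<bar>)"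
  proof (rule Pq_mono[OF q])
    fix X assume "\<not> psi1 \<eta> A N n p X"
    then have "\<bar>Z X + D\<bar> \<le> \<tau>"
      unfolding psi1_def T1_eq_centered_sum_plus_shift[where q=q] Z_def D_def \<tau>_def P_def by simp
    then show "D / 2 \<le> \<bar>Z X\<bar>" using shift(1) unfolding \<tau>_def by linarith
  qed
  also have "\<dots> \<le> (\<Sum>j\<in>{A<..N}. q j) / (real n * (D / 2)\<^sup>2)"
    unfolding Z_def using D0 by (intro Pq_centered_sum_ge[OF q sub n]) simp
  also have "(\<Sum>j\<in>{A<..N}. q j) = P + D" unfolding P_def D_def by (simp add: sum_subtractf)
  also have "(P + D) / (real n * (D / 2)\<^sup>2) = 4 * P / (real n * D\<^sup>2) + 4 / (real n * D)"
    using D0 n0 by (simp add: field_simps power2_eq_square)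
  also have "\<dots> \<le> \<eta> / 16 + \<eta> / 4"
  proof (rule add_mono)
    have "(2 * \<tau>)\<^sup>2 \<le> D\<^sup>2" using shift(1) \<tau>0 unfolding \<tau>_def by (intro power_mono) auto
    then have "64 / \<eta> * (P / real n) \<le> D\<^sup>2"
      unfolding \<tau>_def using P0 n0 \<eta> by (simp add: power_mult_distrib power_divide mult.commute)
    then show "4 * P / (real n * D\<^sup>2) \<le> \<eta> / 16" using \<eta> n0 D0 by (simp add: field_simps)
    show "4 / (real n * D) \<le> \<eta> / 4" using shift(2) \<eta> n0 D0 by (simp add: field_simps)
  qed
  finally show ?thesis using \<eta> by linarith
qed

definition collision_const :: "real \<Rightarrow> real" where
  "collision_const \<eta> = 8 / (\<eta> * exp (- (4 / \<eta>)) ^ 2)"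

lemma Pq_not_psi2_le:
  assumes \<eta>: "0 < \<eta>" and n: "2 \<le> n" "even n" and q: "\<forall>j\<in>{1..N}. 0 \<le> q j \<and> q j \<le> 1"
    and q_sq: "collision_const \<eta> / (real n)\<^sup>2 \<le> (\<Sum>j\<in>{A<..N}. (q j)\<^sup>2)"
  shows "Pq N n q (\<lambda>X. \<not> psi2 A N n X) \<le> \<eta> / 2"
proof -
  obtain m where m: "n = 2 * m" using n by blast
  have "Pq N n q (\<lambda>X. \<not> psi2 A N n X)
      \<le> Pq N n q (\<lambda>X. \<forall>j\<in>{A<..N}. \<not> split_collision m (\<lambda>l. X l j))"
  proof (rule Pq_mono[OF q])
    fix X assume no_psi2: "\<not> psi2 A N n X"
    show "\<forall>j\<in>{A<..N}. \<not> split_collision m (\<lambda>l. X l j)"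
    proof (intro ballI notI)
      fix j assume j: "j \<in> {A<..N}" and "split_collision m (\<lambda>l. X l j)"
      then obtain l1 l2 where l: "l1 \<in> {1..m}" "X l1 j" "l2 \<in> {m<..2*m}" "X l2 j"
        unfolding split_collision_def by blast
      then have "card {l1, l2} \<le> cnt n X j"
        unfolding cnt_def m by (intro card_mono) auto
      with l have "2 \<le> cnt n X j" by auto
      then show False using no_psi2 j unfolding psi2_def by auto
    qed
  qed
  also have "\<dots> = (\<Prod>j\<in>{A<..N}. 2 * (1 - q j) ^ m - (1 - q j) ^ (2*m))"
    unfolding m by (rule Pq_no_split_collision)
  also have "\<dots> \<le> \<eta> / 2"
    using \<eta> n q q_sq unfolding m collision_const_def by (intro prod_no_collision_le) auto
  finally show ?thesis .
qed

definition separation_const :: "real \<Rightarrow> real" where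
  "separation_const \<eta> = 8 / sqrt \<eta> + 16 / \<eta> + collision_const \<eta> + 4"

lemma separation_const_pos: "0 < \<eta> \<Longrightarrow> 0 < separation_const \<eta>"
  unfolding separation_const_def collision_const_def by (simp add: add_pos_pos)

lemma collision_const_le_sum_sq:
  fixes \<eta> t :: real and A N n :: nat and p q :: "nat \<Rightarrow> real"
  defines "P \<equiv> \<Sum>j\<in>{A<..N}. p j" and "D \<equiv> \<Sum>j\<in>{A<..N}. q j - p j"
  assumes \<eta>: "0 < \<eta>" and t: "1 \<le> t" "t \<le> 2" and n: "1 \<le> n"
    and pq: "\<forall>j\<in>{1..N}. 0 \<le> p j \<and> 0 \<le> q j"
    and p_sq: "(\<Sum>j\<in>{A<..N}. (p j)\<^sup>2) \<le> 1 / (real n)\<^sup>2"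
    and shift: "D \<le> 2 * (4 / sqrt \<eta> * sqrt (P / real n)) + 16 / (\<eta> * real n)"
    and sep: "separation_const \<eta> * (pow0 P ((2 - t) / t) / real n powr ((2 * t - 2) / t) + 1 / real n)
      \<le> tail_norm t A N (\<lambda>j. q j - p j)"
  shows "collision_const \<eta> / (real n)\<^sup>2 \<le> (\<Sum>j\<in>{A<..N}. (q j)\<^sup>2)"
proof (rule ccontr)
  assume "\<not> ?thesis"
  then have q_sq: "(\<Sum>j\<in>{A<..N}. (q j)\<^sup>2) \<le> collision_const \<eta> / (real n)\<^sup>2" by simp
  define a where "a = 8 / sqrt \<eta> + 16 / \<eta>"
  define u where "u = max P (1 / real n)"
  define H where "H = pow0 P ((2 - t) / t) / real n powr ((2 * t - 2) / t) + 1 / real n"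
  have P0: "0 \<le> P" unfolding P_def using pq by (intro sum_nonneg) auto
  have pq': "\<forall>j\<in>{A<..N}. 0 \<le> p j \<and> 0 \<le> q j" using pq by auto
  have H: "0 < H" unfolding H_def using n P0 by (intro add_nonneg_pos) (auto simp: pow0_def)
  have K: "0 \<le> collision_const \<eta>" unfolding collision_const_def using \<eta> by simp
  have "4 / sqrt \<eta> * sqrt (P / real n) \<le> 4 / sqrt \<eta> * u"
    unfolding u_def using sqrt_div_le_max[OF P0 n] \<eta> by (intro mult_left_mono) auto
  then have "2 * (4 / sqrt \<eta> * sqrt (P / real n)) \<le> 8 / sqrt \<eta> * u" by simp
  moreover have "16 / \<eta> * (1 / real n) \<le> 16 / \<eta> * u"
    unfolding u_def using \<eta> by (intro mult_left_mono) auto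
  then have "16 / (\<eta> * real n) \<le> 16 / \<eta> * u" by simp
  ultimately have "D \<le> a * u" using shift unfolding a_def by (simp add: algebra_simps)
  then have "(\<Sum>j\<in>{A<..N}. \<bar>q j - p j\<bar> powr t)
      \<le> (a + collision_const \<eta> + 3) * (u powr (2 - t) / real n powr (2 * t - 2))"
    using t n pq' p_sq q_sq unfolding u_def P_def D_def by (intro sum_abs_diff_powr_le) auto
  also have "\<dots> \<le> (a + collision_const \<eta> + 3) * H powr t"
    unfolding u_def H_def using P0 t n a_def \<eta> K
    by (intro mult_left_mono max_powr_scale_le_rate_powr) auto
  finally have "tail_norm t A N (\<lambda>j. q j - p j) \<le> (a + collision_const \<eta> + 3) * H"
    unfolding tail_norm_def using t H \<eta> K unfolding a_def
    by (intro powr_inverse_le_of_le_mult_powr sum_nonneg) auto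
  moreover have "(a + collision_const \<eta> + 4) * H \<le> tail_norm t A N (\<lambda>j. q j - p j)"
    using sep unfolding separation_const_def a_def H_def .
  ultimately show False using H by (simp add: distrib_right)
qed

lemma sum_sq_beyond_A_le_eta:
  assumes \<eta>: "\<eta> < 1" and c: "0 < cI" "cI \<le> \<eta> / 8" "0 < cA" "cA \<le> \<eta> / 8"
    and p: "\<forall>j\<in>{1..N}. 0 \<le> p j" and t: "t \<le> 2" and n: "1 \<le> n"
  shows "(\<Sum>i\<in>{A_idx t cI cA N n p<..N}. (p i)\<^sup>2) \<le> \<eta> / 4 / (real n)\<^sup>2"
proof -
  have "cA ^ 4 \<le> cA ^ 1" using c \<eta> by (intro power_decreasing) auto
  then have "cI + cA ^ 4 \<le> \<eta> / 4" using c by simp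
  then have "(cI + cA ^ 4) / (real n)\<^sup>2 \<le> \<eta> / 4 / (real n)\<^sup>2" by (rule divide_right_mono) simp
  moreover have "(\<Sum>i\<in>{A_idx t cI cA N n p<..N}. (p i)\<^sup>2) \<le> (cI + cA ^ 4) / (real n)\<^sup>2"
    using p t c n by (intro sum_sq_beyond_A_le) auto
  ultimately show ?thesis by linarith
qed

lemma Pq_test_null_le:
  assumes \<eta>: "0 < \<eta>" "\<eta> < 1" and c: "0 < cI" "cI \<le> \<eta> / 8" "0 < cA" "cA \<le> \<eta> / 8"
    and t: "t \<le> 2" and n: "1 \<le> n" and p: "\<forall>j\<in>{1..N}. 0 \<le> p j \<and> p j \<le> 1"
  shows "Pq N n p (test \<eta> t cI cA N n p) \<le> \<eta> / 2"
proof -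
  define A where "A = A_idx t cI cA N n p"
  have "Pq N n p (test \<eta> t cI cA N n p) \<le> Pq N n p (psi1 \<eta> A N n p) + Pq N n p (psi2 A N n)"
    unfolding test_def Let_def A_def[symmetric] by (rule Pq_disj_le[OF p])
  also have "\<dots> \<le> \<eta> / 16 + (real n)\<^sup>2 / 2 * (\<eta> / 4 / (real n)\<^sup>2)"
  proof (rule add_mono)
    show "Pq N n p (psi1 \<eta> A N n p) \<le> \<eta> / 16" using Pq_psi1_null_le[OF \<eta>(1) n p] .
    have "(\<Sum>j\<in>{A<..N}. (p j)\<^sup>2) \<le> \<eta> / 4 / (real n)\<^sup>2"
      unfolding A_def using p by (intro sum_sq_beyond_A_le_eta[OF \<eta>(2) c _ t n]) auto
    then have "(real n)\<^sup>2 / 2 * (\<Sum>j\<in>{A<..N}. (p j)\<^sup>2) \<le> (real n)\<^sup>2 / 2 * (\<eta> / 4 / (real n)\<^sup>2)"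
      by (rule mult_left_mono) simp
    then show "Pq N n p (psi2 A N n) \<le> (real n)\<^sup>2 / 2 * (\<eta> / 4 / (real n)\<^sup>2)"
      using Pq_psi2_le[OF p, where A=A and n=n] by linarith
  qed
  also have "\<dots> \<le> \<eta> / 2" using n \<eta> by simp
  finally show ?thesis .
qed

lemma Pq_not_test_le:
  assumes \<eta>: "0 < \<eta>" "\<eta> < 1" and c: "0 < cI" "cI \<le> \<eta> / 8" "0 < cA" "cA \<le> \<eta> / 8"
    and t: "1 \<le> t" "t \<le> 2" and n: "2 \<le> n" "even n"
    and p: "\<forall>j\<in>{1..N}. 0 \<le> p j \<and> p j \<le> 1" and q: "\<forall>j\<in>{1..N}. 0 \<le> q j \<and> q j \<le> 1"
    and sep: "separation_const \<eta> * (pow0 (\<Sum>i\<in>{A_idx t cI cA N n p<..N}. p i) ((2 - t) / t)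
        / real n powr ((2 * t - 2) / t) + 1 / real n)
      \<le> tail_norm t (A_idx t cI cA N n p) N (\<lambda>j. q j - p j)"
  shows "Pq N n q (\<lambda>X. \<not> test \<eta> t cI cA N n p X) \<le> \<eta> / 2"
proof -
  define A where "A = A_idx t cI cA N n p"
  define P where "P = (\<Sum>j\<in>{A<..N}. p j)"
  define D where "D = (\<Sum>j\<in>{A<..N}. q j - p j)"
  have n1: "1 \<le> n" using n by simp
  have test: "test \<eta> t cI cA N n p X \<longleftrightarrow> psi1 \<eta> A N n p X \<or> psi2 A N n X" for X
    unfolding test_def A_def Let_def ..
  show ?thesis
  proof (cases "2 * (4 / sqrt \<eta> * sqrt (P / real n)) \<le> D \<and> 16 / (\<eta> * real n) \<le> D")
    case True
    then have "Pq N n q (\<lambda>X. \<not> psi1 \<eta> A N n p X) \<le> \<eta> / 2"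
      using \<eta> n1 q p unfolding P_def D_def by (intro Pq_not_psi1_le) auto
    moreover have "Pq N n q (\<lambda>X. \<not> test \<eta> t cI cA N n p X) \<le> Pq N n q (\<lambda>X. \<not> psi1 \<eta> A N n p X)"
      using q by (rule Pq_mono) (simp add: test)
    ultimately show ?thesis by linarith
  next
    case False
    have "0 \<le> P" unfolding P_def using p by (intro sum_nonneg) auto
    then have "0 \<le> 4 / sqrt \<eta> * sqrt (P / real n)" "0 \<le> 16 / (\<eta> * real n)" using \<eta> by auto
    with False have "D \<le> 2 * (4 / sqrt \<eta> * sqrt (P / real n)) + 16 / (\<eta> * real n)" by linarith
    moreover have "(\<Sum>j\<in>{A<..N}. (p j)\<^sup>2) \<le> 1 / (real n)\<^sup>2"
    proof -
      have "\<eta> / 4 / (real n)\<^sup>2 \<le> 1 / (real n)\<^sup>2" using \<eta> by (intro divide_right_mono) auto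
      moreover have "(\<Sum>j\<in>{A<..N}. (p j)\<^sup>2) \<le> \<eta> / 4 / (real n)\<^sup>2"
        unfolding A_def using p by (intro sum_sq_beyond_A_le_eta[OF \<eta>(2) c _ t(2) n1]) auto
      ultimately show ?thesis by linarith
    qed
    ultimately have "collision_const \<eta> / (real n)\<^sup>2 \<le> (\<Sum>j\<in>{A<..N}. (q j)\<^sup>2)"
      using p q sep unfolding P_def D_def A_def
      by (intro collision_const_le_sum_sq[OF \<eta>(1) t n1]) auto
    then have "Pq N n q (\<lambda>X. \<not> psi2 A N n X) \<le> \<eta> / 2"
      using \<eta> n q by (intro Pq_not_psi2_le) auto
    moreover have "Pq N n q (\<lambda>X. \<not> test \<eta> t cI cA N n p X) \<le> Pq N n q (\<lambda>X. \<not> psi2 A N n X)"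
      using q by (rule Pq_mono) (simp add: test)
    ultimately show ?thesis by linarith
  qed
qed

theorem proposition6:
  fixes \<eta> :: real
  assumes "0 < \<eta>" and "\<eta> < 1"
  shows "\<exists>c0 > 0. \<forall>t::real. 1 \<le> t \<and> t \<le> 2 \<longrightarrow> (\<exists>C' > 0.
    \<forall>cI cA :: real. 0 < cI \<and> cI \<le> c0 \<and> 0 < cA \<and> cA \<le> c0 \<longrightarrow>
    (\<forall>(N::nat) (n::nat) (p::nat \<Rightarrow> real).
       2 \<le> N \<and> 2 \<le> n \<and> even n \<and>
       (\<forall>j\<in>{1..N}. 0 \<le> p j \<and> p j \<le> 1/2) \<and>
       (\<forall>i\<in>{1..N}. \<forall>j\<in>{1..N}. i \<le> j \<longrightarrow> p j \<le> p i) \<longrightarrow>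
       (let A = A_idx t cI cA N n p in
         Pq N n p (test \<eta> t cI cA N n p) \<le> \<eta> / 2 \<and>
         (\<forall>q::nat \<Rightarrow> real. (\<forall>j\<in>{1..N}. 0 \<le> q j \<and> q j \<le> 1) \<and>
            tail_norm t A N (\<lambda>j. q j - p j)
              \<ge> C' * (pow0 (\<Sum>i\<in>{A<..N}. p i) ((2 - t) / t) / real n powr ((2 * t - 2) / t)
                      + 1 / real n) \<longrightarrow>
            Pq N n q (\<lambda>X. \<not> test \<eta> t cI cA N n p X) \<le> \<eta> / 2))))"
proof (rule exI[of _ "\<eta> / 8"], intro conjI allI impI exI[of _ "separation_const \<eta>"])
  show "0 < \<eta> / 8" using assms by simp
  show "0 < separation_const \<eta>" using assms(1) by (rule separation_const_pos)
qed (unfold Let_def, intro conjI allI impI Pq_test_null_le Pq_not_test_le; use assms in auto)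

end
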